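(* Let $n\in\{2,3\}$, $d\ge2$ and $\alpha\in(0,1)$. There exist $C>0$ and $k_0$ such that for all integers $k\ge k_0$ and all $\rho\in\mathcal D_k$, $$\Big\|W_\rho\sum_{i=2}^dW_\rho^2(\hat\Theta_i\,\cdot)\Big\|_*\le Ce^{-(1-\alpha)\frac{2\pi\rho}{dk}}\quad\text{and}\quad\Big\|W_\rho\sum_{i=2}^dW_\rho(\hat\Theta_i\,\cdot)\Big\|_*\le Ce^{-(1-\alpha)\frac{2\pi\rho}{dk}}.$$
   Context: $\Theta_\theta(x_1,x_2,x')=(x_1\cos\theta+x_2\sin\theta,\,-x_1\sin\theta+x_2\cos\theta,\,x')$ on $\mathbb R^n$; $\hat\Theta_i:=\Theta_{2\pi(i-1)/(dk)}$, $i=1,\dots,d$; $\xi_\ell:=\big(\cos\tfrac{2\pi(\ell-1)}{k},\sin\tfrac{2\pi(\ell-1)}{k},0,\dots,0\big)$, $\ell=1,\dots,k$; $\eta_{i\ell}:=\hat\Theta_i^{-1}\xi_\ell$. $U$ is the unique positive radial decaying solution of $-\Delta U+U=U^3$ in $\mathbb R^n$, and $W_\rho(x):=\sum_{h=1}^kU(x-\rho\xi_h)$. Fixed constants $0<r_1<r_2$ define $\mathcal D_k:=[r_1k\ln k,\,r_2k\ln k]$. $\|h\|_*:=\sup_{x\in\mathbb R^n}\big(\sum_{i=1}^d\sum_{j=1}^ke^{-\alpha|x-\rho\eta_{ij}|}\big)^{-1}|h(x)|$. *)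

theory Defs
  imports "HOL-Analysis.Analysis"
begin

text \<open>Euclidean space R^n is modelled as real^'n with a well-ordered finite index type;
  the first two coordinates x1, x2 are the two least indices.\<close>

definition ix1 :: "'n::{finite,wellorder}" where
  "ix1 = (LEAST i. True)"

definition ix2 :: "'n::{finite,wellorder}" where
  "ix2 = (LEAST i. i \<noteq> ix1)"

definition Rot :: "real \<Rightarrow> real^'n::{finite,wellorder} \<Rightarrow> real^'n::{finite,wellorder}" where
  "Rot \<theta> x = (\<chi> j. if j = ix1 then x$ix1 * cos \<theta> + x$ix2 * sin \<theta>
                    else if j = ix2 then - x$ix1 * sin \<theta> + x$ix2 * cos \<theta>
                    else x$j)"

definition ThetaHat :: "nat \<Rightarrow> nat \<Rightarrow> nat \<Rightarrow> real^'n::{finite,wellorder} \<Rightarrow> real^'n::{finite,wellorder}" where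
  "ThetaHat d k i = Rot (2 * pi * (real i - 1) / (real d * real k))"

definition xi :: "nat \<Rightarrow> nat \<Rightarrow> real^'n::{finite,wellorder}" where
  "xi k l = (\<chi> j. if j = ix1 then cos (2 * pi * (real l - 1) / real k)
                  else if j = ix2 then sin (2 * pi * (real l - 1) / real k)
                  else 0)"

text \<open>eta_{il} = hat Theta_i^{-1} xi_l; the inverse of Theta_theta is Theta_{-theta}.\<close>
definition eta :: "nat \<Rightarrow> nat \<Rightarrow> nat \<Rightarrow> nat \<Rightarrow> real^'n::{finite,wellorder}" where
  "eta d k i l = Rot (- (2 * pi * (real i - 1) / (real d * real k))) (xi k l)"

definition Wrho :: "(real^'n::{finite,wellorder} \<Rightarrow> real) \<Rightarrow> nat \<Rightarrow> real \<Rightarrow> real^'n::{finite,wellorder} \<Rightarrow> real" where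
  "Wrho U k \<rho> x = (\<Sum>h = 1..k. U (x - \<rho> *\<^sub>R xi k h))"

definition star_norm :: "nat \<Rightarrow> nat \<Rightarrow> real \<Rightarrow> real \<Rightarrow> (real^'n::{finite,wellorder} \<Rightarrow> real) \<Rightarrow> ereal" where
  "star_norm d k \<alpha> \<rho> h =
     (SUP x. ereal (\<bar>h x\<bar> / (\<Sum>i = 1..d. \<Sum>j = 1..k. exp (- \<alpha> * norm (x - \<rho> *\<^sub>R eta d k i j)))))"

definition Dk :: "real \<Rightarrow> real \<Rightarrow> nat \<Rightarrow> real set" where
  "Dk r1 r2 k = {r1 * real k * ln (real k) .. r2 * real k * ln (real k)}"

definition C2_with :: "('a::euclidean_space \<Rightarrow> real) \<Rightarrow> ('a \<Rightarrow> 'a \<Rightarrow>\<^sub>L real)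
     \<Rightarrow> ('a \<Rightarrow> 'a \<Rightarrow>\<^sub>L ('a \<Rightarrow>\<^sub>L real)) \<Rightarrow> bool" where
  "C2_with U DU DDU \<longleftrightarrow>
     (\<forall>x. (U has_derivative blinfun_apply (DU x)) (at x)) \<and>
     (\<forall>x. (DU has_derivative blinfun_apply (DDU x)) (at x)) \<and>
     continuous_on UNIV DDU"

definition laplacian_with :: "('a::euclidean_space \<Rightarrow> 'a \<Rightarrow>\<^sub>L ('a \<Rightarrow>\<^sub>L real)) \<Rightarrow> 'a \<Rightarrow> real" where
  "laplacian_with DDU x = (\<Sum>b\<in>Basis. blinfun_apply (blinfun_apply (DDU x) b) b)"

definition ground_state :: "('a::euclidean_space \<Rightarrow> real) \<Rightarrow> bool" where
  "ground_state U \<longleftrightarrow>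
     (\<exists>DU DDU. C2_with U DU DDU \<and> (\<forall>x. - laplacian_with DDU x + U x = U x ^ 3)) \<and>
     (\<forall>x. U x > 0) \<and>
     (\<forall>x y. norm x = norm y \<longrightarrow> U x = U y) \<and>
     (U \<longlongrightarrow> 0) at_infinity"

end

theory Submission
  imports Defs
begin

text \<open>First, the ground state decays like \<open>exp (- norm x)\<close>: at an interior
  maximum of \<open>U - C * exp (- a * norm x)\<close> the Laplacian of \<open>U\<close> is bounded by that of the barrier,
  and the equation \<open>- \<Delta>U + U = U\<^sup>3\<close> then forces \<open>U\<close> below the barrier wherever \<open>U\<^sup>2\<close> is smaller
  than \<open>1 - a\<^sup>2 + a (n - 1) / norm x\<close>; this is applied with \<open>a = 1/2\<close> and then, thanks to the decay
  just obtained, with \<open>a = 1\<close>. Second, for \<open>i \<ge> 2\<close> the bumps of \<open>W\<^sub>\<rho>\<close> sit at the vertices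
  \<open>\<rho> \<xi>\<^sub>h\<close> of a regular \<open>k\<close>-gon and those of \<open>W\<^sub>\<rho> (\<Theta>\<^sub>i \<cdot>)\<close> at the rotated vertices \<open>\<rho> \<eta>\<^sub>i\<^sub>j\<close>, whose
  distances \<open>2 \<rho> \<bar>sin (\<pi> (m + (i - 1) / d) / k)\<bar>\<close> to the former are at least about \<open>2 \<pi> \<rho> / (d k)\<close>.
  Splitting \<open>exp (- norm (x - a)) exp (- norm (x - b)) \<le> exp (- \<alpha> norm (x - b)) exp (- (1 - \<alpha>) norm (a - b))\<close>
  produces the weight of \<open>\<parallel>\<cdot>\<parallel>\<^sub>*\<close> times a sum over the polygon that is dominated by its two nearest
  vertices, hence is \<open>O (exp (- (1 - \<alpha>) 2 \<pi> \<rho> / (d k)))\<close> for \<open>\<rho> \<in> D\<^sub>k\<close>, while \<open>W\<^sub>\<rho>\<close> stays bounded.\<close>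

section \<open>Exponential decay of the ground state\<close>

lemma second_derivative_nonpos_at_local_max:
  fixes g g' :: "real \<Rightarrow> real"
  assumes "0 < e"
    and deriv: "\<And>t. \<bar>t\<bar> < e \<Longrightarrow> (g has_real_derivative g' t) (at t)"
    and deriv2: "(g' has_real_derivative L) (at 0)"
    and max: "\<And>t. \<bar>t\<bar> < e \<Longrightarrow> g t \<le> g 0"
  shows "L \<le> 0"
proof (rule ccontr)
  assume "\<not> L \<le> 0"
  have "g' 0 = 0"
    by (rule DERIV_local_max[OF deriv \<open>0 < e\<close>]) (use \<open>0 < e\<close> max in auto)
  moreover obtain \<delta> where "\<delta> > 0" and \<delta>: "\<And>h. 0 < h \<Longrightarrow> h < \<delta> \<Longrightarrow> g' 0 < g' h"
    using DERIV_pos_inc_right[OF deriv2] \<open>\<not> L \<le> 0\<close> by force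
  define h where "h = min \<delta> e / 2"
  have h: "0 < h" "h < \<delta>" "h < e"
    using \<open>\<delta> > 0\<close> \<open>0 < e\<close> by (auto simp: h_def)
  obtain z where z: "0 < z" "z < h" "g h - g 0 = h * g' z"
    using MVT2[of 0 h g g'] h deriv by auto
  ultimately have "g' z > 0"
    using \<delta>[of z] h by simp
  with z h have "g h > g 0"
    using mult_pos_pos[of h "g' z"] by linarith
  with max[of h] h show False by simp
qed

lemma has_vector_derivative_along_line:
  fixes F :: "'a::real_normed_vector \<Rightarrow> 'b::real_normed_vector"
  assumes "(F has_derivative F') (at (x0 + t *\<^sub>R b))"
  shows "((\<lambda>t. F (x0 + t *\<^sub>R b)) has_vector_derivative F' b) (at t)"
proof -
  have "((\<lambda>t. x0 + t *\<^sub>R b) has_derivative (\<lambda>h. h *\<^sub>R b)) (at t)"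
    by (auto intro!: derivative_eq_intros)
  from has_derivative_compose[OF this assms]
  have "((\<lambda>t. F (x0 + t *\<^sub>R b)) has_derivative (\<lambda>h. F' (h *\<^sub>R b))) (at t)" .
  moreover have "F' (h *\<^sub>R b) = h *\<^sub>R F' b" for h
    using assms by (simp add: has_derivative_bounded_linear linear_simps)
  ultimately show ?thesis
    by (simp add: has_vector_derivative_def)
qed

lemma norm_add_scaleR_unit:
  fixes x b :: "'a::real_inner"
  assumes "norm b = 1"
  shows "norm (x + t *\<^sub>R b) = sqrt ((norm x)\<^sup>2 + 2 * (x \<bullet> b) * t + t\<^sup>2)"
proof -
  have "b \<bullet> b = 1"
    using assms by (simp add: dot_square_norm)
  then have "(norm (x + t *\<^sub>R b))\<^sup>2 = (norm x)\<^sup>2 + 2 * (x \<bullet> b) * t + t\<^sup>2"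
    unfolding power2_norm_eq_inner
    by (simp add: inner_add_left inner_add_right inner_commute algebra_simps power2_eq_square)
  then show ?thesis
    by (metis norm_ge_zero real_sqrt_abs abs_of_nonneg)
qed

text \<open>The first two derivatives of \<open>t \<mapsto> exp (- a * norm (x + t *\<^sub>R b))\<close> for a unit vector \<open>b\<close>,
  with \<open>r = norm x\<close> and \<open>c = x \<bullet> b\<close>.\<close>

lemma DERIV_exp_sqrt_quadratic:
  fixes a c r t :: real
  assumes "r\<^sup>2 + 2 * c * t + t\<^sup>2 > 0"
  shows "((\<lambda>t. exp (- a * sqrt (r\<^sup>2 + 2 * c * t + t\<^sup>2))) has_real_derivative
     - a * exp (- a * sqrt (r\<^sup>2 + 2 * c * t + t\<^sup>2)) * ((c + t) / sqrt (r\<^sup>2 + 2 * c * t + t\<^sup>2))) (at t)"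
  using assms
  by (auto intro!: derivative_eq_intros) (auto simp: field_simps power2_eq_square)

lemma DERIV2_exp_sqrt_quadratic_at_0:
  fixes a c r :: real
  assumes "r > 0"
  shows "((\<lambda>t. - a * exp (- a * sqrt (r\<^sup>2 + 2 * c * t + t\<^sup>2)) * ((c + t) / sqrt (r\<^sup>2 + 2 * c * t + t\<^sup>2)))
     has_real_derivative exp (- a * r) * (a\<^sup>2 * c\<^sup>2 / r\<^sup>2 - a * (r\<^sup>2 - c\<^sup>2) / r ^ 3)) (at 0)"
proof -
  have sqrt_r: "sqrt (r\<^sup>2) = r" using assms by simp
  show ?thesis
    using assms by (auto intro!: derivative_eq_intros simp: sqrt_r)
      (auto simp: field_simps power2_eq_square power3_eq_cube)
qed

lemma second_directional_derivative_le_at_local_max: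
  fixes U :: "'a::euclidean_space \<Rightarrow> real"
  assumes C2: "C2_with U DU DDU" and e: "0 < e" "e \<le> norm x0"
    and max: "\<And>y. norm (y - x0) < e \<Longrightarrow>
      U y - C * exp (- a * norm y) \<le> U x0 - C * exp (- a * norm x0)"
    and b: "norm b = 1"
  shows "DDU x0 b b \<le> C * (exp (- a * norm x0) *
    (a\<^sup>2 * (x0 \<bullet> b)\<^sup>2 / (norm x0)\<^sup>2 - a * ((norm x0)\<^sup>2 - (x0 \<bullet> b)\<^sup>2) / norm x0 ^ 3))"
proof -
  define r c where "r = norm x0" and "c = x0 \<bullet> b"
  define N where "N t = sqrt (r\<^sup>2 + 2 * c * t + t\<^sup>2)" for t
  have norm_line: "norm (x0 + t *\<^sub>R b) = N t" for t
    using norm_add_scaleR_unit[OF b] by (simp add: N_def r_def c_def)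
  have N_pos: "r\<^sup>2 + 2 * c * t + t\<^sup>2 > 0" if "\<bar>t\<bar> < e" for t
  proof -
    have "r - \<bar>t\<bar> \<le> norm (x0 + t *\<^sub>R b)"
      using norm_triangle_ineq2[of x0 "- (t *\<^sub>R b)"] b by (simp add: r_def)
    with that e have "N t > 0"
      by (simp add: norm_line r_def)
    then show ?thesis
      by (simp add: N_def)
  qed
  have dU: "\<And>x. (U has_derivative DU x) (at x)"
    and dDU: "\<And>x. (DU has_derivative DDU x) (at x)"
    using C2 by (auto simp: C2_with_def)
  define g where "g t = U (x0 + t *\<^sub>R b) - C * exp (- a * N t)" for t
  define g' where "g' t = DU (x0 + t *\<^sub>R b) b - C * (- a * exp (- a * N t) * ((c + t) / N t))"
    for t
  have "(g has_real_derivative g' t) (at t)" if "\<bar>t\<bar> < e" for t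
  proof -
    have "((\<lambda>t. U (x0 + t *\<^sub>R b)) has_real_derivative DU (x0 + t *\<^sub>R b) b) (at t)"
      using has_vector_derivative_along_line[OF dU]
      by (simp add: has_real_derivative_iff_has_vector_derivative)
    with N_pos[OF that] show ?thesis
      unfolding g_def g'_def N_def by (intro DERIV_diff DERIV_cmult DERIV_exp_sqrt_quadratic)
  qed
  moreover have "(g' has_real_derivative DDU x0 b b - C * (exp (- a * r) *
      (a\<^sup>2 * c\<^sup>2 / r\<^sup>2 - a * (r\<^sup>2 - c\<^sup>2) / r ^ 3))) (at 0)"
  proof -
    have "((\<lambda>t. DU (x0 + t *\<^sub>R b)) has_vector_derivative DDU (x0 + 0 *\<^sub>R b) b) (at 0)"
      by (rule has_vector_derivative_along_line[OF dDU])
    from bounded_linear.has_vector_derivative[OF blinfun.bounded_linear_left this]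
    have "((\<lambda>t. DU (x0 + t *\<^sub>R b) b) has_real_derivative DDU x0 b b) (at 0)"
      by (simp add: has_real_derivative_iff_has_vector_derivative)
    moreover have "r > 0"
      using e unfolding r_def by linarith
    ultimately show ?thesis
      unfolding g'_def N_def by (intro DERIV_diff DERIV_cmult DERIV2_exp_sqrt_quadratic_at_0)
  qed
  moreover have "g t \<le> g 0" if "\<bar>t\<bar> < e" for t
    using max[of "x0 + t *\<^sub>R b"] b that norm_line[of 0]
    by (simp add: g_def norm_line[symmetric])
  ultimately have "DDU x0 b b - C * (exp (- a * r) *
      (a\<^sup>2 * c\<^sup>2 / r\<^sup>2 - a * (r\<^sup>2 - c\<^sup>2) / r ^ 3)) \<le> 0"
    by (rule second_derivative_nonpos_at_local_max[OF e(1)])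
  then show ?thesis
    by (simp add: r_def c_def)
qed

lemma laplacian_le_at_local_max:
  fixes U :: "'a::euclidean_space \<Rightarrow> real"
  assumes "C2_with U DU DDU" "0 < e" "e \<le> norm x0"
    and "\<And>y. norm (y - x0) < e \<Longrightarrow>
      U y - C * exp (- a * norm y) \<le> U x0 - C * exp (- a * norm x0)"
  shows "laplacian_with DDU x0 \<le> C * (exp (- a * norm x0) * (a\<^sup>2 - a * (real DIM('a) - 1) / norm x0))"
proof -
  define r where "r = norm x0"
  have "r > 0"
    using assms(2,3) unfolding r_def by linarith
  define \<phi> where "\<phi> c = exp (- a * r) * (a\<^sup>2 * c\<^sup>2 / r\<^sup>2 - a * (r\<^sup>2 - c\<^sup>2) / r ^ 3)" for c
  have \<phi>_eq: "\<phi> c = exp (- a * r) * (a\<^sup>2 / r\<^sup>2 + a / r ^ 3) * c\<^sup>2 - exp (- a * r) * a / r" for c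
    using \<open>r > 0\<close> unfolding \<phi>_def by (simp add: field_simps power2_eq_square power3_eq_cube)
  have "DDU x0 b b \<le> C * \<phi> (x0 \<bullet> b)" if "b \<in> Basis" for b
    using second_directional_derivative_le_at_local_max[OF assms norm_Basis[OF that]]
    by (simp add: \<phi>_def r_def)
  then have "laplacian_with DDU x0 \<le> C * (\<Sum>b\<in>Basis. \<phi> (x0 \<bullet> b))"
    unfolding laplacian_with_def sum_distrib_left by (intro sum_mono)
  also have "(\<Sum>b\<in>Basis. (x0 \<bullet> b)\<^sup>2) = r\<^sup>2"
    unfolding r_def power2_norm_eq_inner euclidean_inner[of x0 x0] by (simp add: power2_eq_square)
  then have "(\<Sum>b\<in>Basis. \<phi> (x0 \<bullet> b)) = exp (- a * r) * (a\<^sup>2 - a * (real DIM('a) - 1) / r)"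
    using \<open>r > 0\<close> unfolding \<phi>_eq sum_subtractf sum_distrib_left[symmetric]
    by (simp add: field_simps power2_eq_square power3_eq_cube)
  finally show ?thesis
    by (simp add: r_def)
qed

lemma le_of_cubic_comparison:
  fixes u E s :: real
  assumes "u - u ^ 3 \<le> E * s" "s \<le> 1 - u\<^sup>2" "u\<^sup>2 < 1" "0 \<le> E"
  shows "u \<le> E"
proof -
  have "u * (1 - u\<^sup>2) \<le> E * (1 - u\<^sup>2)"
    using assms(1) mult_left_mono[OF assms(2,4)] by (simp add: power2_eq_square power3_eq_cube algebra_simps)
  with assms(3) show ?thesis
    by simp
qed

lemma le_exp_barrier_at_local_max:
  fixes U :: "'a::euclidean_space \<Rightarrow> real"
  assumes C2: "C2_with U DU DDU" and eq: "- laplacian_with DDU x0 + U x0 = U x0 ^ 3"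
    and e: "0 < e" "e \<le> norm x0"
    and max: "\<And>y. norm (y - x0) < e \<Longrightarrow>
      U y - C * exp (- a * norm y) \<le> U x0 - C * exp (- a * norm x0)"
    and "0 \<le> C" "(U x0)\<^sup>2 < 1" "(U x0)\<^sup>2 \<le> 1 - a\<^sup>2 + a * (real DIM('a) - 1) / norm x0"
  shows "U x0 \<le> C * exp (- a * norm x0)"
proof (rule le_of_cubic_comparison)
  show "U x0 - U x0 ^ 3 \<le> C * exp (- a * norm x0) * (a\<^sup>2 - a * (real DIM('a) - 1) / norm x0)"
    using laplacian_le_at_local_max[OF C2 e max] eq unfolding mult.assoc by linarith
  show "a\<^sup>2 - a * (real DIM('a) - 1) / norm x0 \<le> 1 - (U x0)\<^sup>2"
    using assms(8) by linarith
  show "(U x0)\<^sup>2 < 1"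
    by (fact assms(7))
  show "0 \<le> C * exp (- a * norm x0)"
    using assms(6) by simp
qed

lemma exp_decay_by_maximum_principle:
  fixes U :: "'a::euclidean_space \<Rightarrow> real"
  assumes C2: "C2_with U DU DDU" and eq: "\<And>x. - laplacian_with DDU x + U x = U x ^ 3"
    and pos: "\<And>x. U x > 0" and lim: "(U \<longlongrightarrow> 0) at_infinity"
    and "0 < a" "0 < R"
    and outside: "\<And>x. R \<le> norm x \<Longrightarrow>
      (U x)\<^sup>2 < 1 \<and> (U x)\<^sup>2 \<le> 1 - a\<^sup>2 + a * (real DIM('a) - 1) / norm x"
  shows "\<exists>C. \<forall>x. U x \<le> C * exp (- a * norm x)"
proof -
  have cont: "continuous_on S U" for S
    using C2 unfolding C2_with_def
    by (meson continuous_at_imp_continuous_on has_derivative_continuous)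
  obtain xm where xm: "\<And>x. x \<in> cball 0 R \<Longrightarrow> U x \<le> U xm"
    using continuous_attains_sup[OF compact_cball _ cont, of 0 R] \<open>0 < R\<close> by fastforce
  define C where "C = U xm * exp (a * R)"
  have "C > 0"
    using pos by (simp add: C_def)
  then have C_exp_pos: "C * exp (- a * norm y) > 0" for y
    by simp
  define z where "z x = U x - C * exp (- a * norm x)" for x
  have inside: "z x \<le> 0" if "norm x \<le> R" for x
  proof -
    have "U x \<le> C * exp (- a * R)"
      using xm[of x] that by (simp add: C_def mult.assoc flip: exp_add)
    also have "\<dots> \<le> C * exp (- a * norm x)"
      using \<open>C > 0\<close> \<open>0 < a\<close> that by (auto intro!: mult_left_mono)
    finally show ?thesis
      by (simp add: z_def)
  qed
  have outside_nonpos: "z x \<le> 0" if "R \<le> norm x" for x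
  proof (rule ccontr)
    assume "\<not> z x \<le> 0"
    obtain R' where R': "\<And>y. R' \<le> norm y \<Longrightarrow> U y < z x"
      using lim \<open>\<not> z x \<le> 0\<close> pos unfolding Lim_at_infinity dist_real_def
      by (metis abs_of_pos diff_zero not_le)
    define K where "K = cball (0::'a) R' - ball 0 R"
    have "compact K"
      unfolding K_def by (intro compact_diff compact_cball open_ball)
    moreover have "x \<in> K"
      using R'[of x] C_exp_pos[of x] that by (force simp: K_def z_def)
    moreover have "continuous_on K z"
      unfolding z_def by (intro continuous_intros cont)
    ultimately obtain x0 where "x0 \<in> K" and x0_max: "\<And>y. y \<in> K \<Longrightarrow> z y \<le> z x0"
      using continuous_attains_sup[of K z] by blast
    with \<open>x \<in> K\<close> \<open>\<not> z x \<le> 0\<close> have "z x0 \<ge> z x" "z x0 > 0"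
      by force+
    have "R < norm x0"
      using inside[of x0] \<open>z x0 > 0\<close> by linarith
    have "norm x0 < R'"
      using R'[of x0] \<open>z x0 \<ge> z x\<close> C_exp_pos[of x0] by (force simp: z_def)
    define e where "e = min (norm x0 - R) (R' - norm x0)"
    have e: "0 < e" "e \<le> norm x0"
      using \<open>R < norm x0\<close> \<open>norm x0 < R'\<close> \<open>0 < R\<close> by (auto simp: e_def)
    have x0_local_max: "U y - C * exp (- a * norm y) \<le> U x0 - C * exp (- a * norm x0)"
      if "norm (y - x0) < e" for y
    proof -
      have "y \<in> K"
        using that norm_triangle_ineq3[of y x0] by (auto simp: K_def e_def)
      then show ?thesis
        using x0_max[of y] by (simp add: z_def)
    qed
    have "U x0 \<le> C * exp (- a * norm x0)"
      by (rule le_exp_barrier_at_local_max[OF C2 eq[of x0] e x0_local_max])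
        (use outside[OF less_imp_le[OF \<open>R < norm x0\<close>]] \<open>C > 0\<close> in auto)
    with \<open>z x0 > 0\<close> show False
      by (simp add: z_def)
  qed
  have "U x \<le> C * exp (- a * norm x)" for x
    using inside[of x] outside_nonpos[of x] by (cases "R \<le> norm x") (auto simp: z_def)
  then show ?thesis
    by blast
qed

lemma exp_ge_square_div_4:
  fixes r :: real
  assumes "0 \<le> r"
  shows "r\<^sup>2 / 4 \<le> exp r"
proof -
  have "r / 2 \<le> exp (r / 2)"
    using exp_ge_add_one_self[of "r / 2"] by linarith
  then have "(r / 2)\<^sup>2 \<le> (exp (r / 2))\<^sup>2"
    using assms by (intro power_mono) auto
  then show ?thesis
    by (simp add: power2_eq_square flip: exp_add)
qed

lemma ground_state_exp_decay:
  fixes U :: "'a::euclidean_space \<Rightarrow> real"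
  assumes "ground_state U" and "DIM('a) \<ge> 2"
  shows "\<exists>C. \<forall>x. U x \<le> C * exp (- norm x)"
proof -
  obtain DU DDU where C2: "C2_with U DU DDU" and eq: "\<And>x. - laplacian_with DDU x + U x = U x ^ 3"
    using assms(1) unfolding ground_state_def by blast
  have pos: "\<And>x. U x > 0" and lim: "(U \<longlongrightarrow> 0) at_infinity"
    using assms(1) unfolding ground_state_def by blast+
  note comparison = exp_decay_by_maximum_principle[OF C2 eq pos lim]
  have dim: "1 \<le> real DIM('a) - 1"
    using assms(2) by simp
  \<comment> \<open>A first comparison with rate \<open>1/2\<close> only needs \<open>U\<close> to be small at infinity; the decay it
    yields makes \<open>(U x)\<^sup>2 \<le> 1 / norm x\<close>, which is what the comparison with rate \<open>1\<close> requires.\<close>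
  obtain R1 where R1: "\<And>x. R1 \<le> norm x \<Longrightarrow> \<bar>U x\<bar> < 1 / 2"
    using lim unfolding Lim_at_infinity dist_real_def by (metis diff_zero half_gt_zero zero_less_one)
  have outside_half: "(U x)\<^sup>2 < 1 \<and> (U x)\<^sup>2 \<le> 1 - (1 / 2)\<^sup>2 + 1 / 2 * (real DIM('a) - 1) / norm x"
    if "max R1 1 \<le> norm x" for x
  proof -
    have "(U x)\<^sup>2 < (1 / 2)\<^sup>2"
      using R1[of x] pos[of x] that by (intro power_strict_mono) auto
    moreover have "0 \<le> 1 / 2 * (real DIM('a) - 1) / norm x"
      using dim by simp
    ultimately show ?thesis
      by (simp only: power2_eq_square) linarith
  qed
  have "\<exists>C. \<forall>x. U x \<le> C * exp (- (1 / 2) * norm x)"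
    by (rule comparison[of "1 / 2" "max R1 1", OF _ _ outside_half]) auto
  then obtain C1 where C1: "\<And>x. U x \<le> C1 * exp (- (1 / 2) * norm x)"
    by blast
  define R2 where "R2 = max 2 (4 * C1\<^sup>2 + 1)"
  have outside_one: "(U x)\<^sup>2 < 1 \<and> (U x)\<^sup>2 \<le> 1 - 1\<^sup>2 + 1 * (real DIM('a) - 1) / norm x"
    if "R2 \<le> norm x" for x
  proof -
    define r where "r = norm x"
    have r: "2 \<le> r" "4 * C1\<^sup>2 + 1 \<le> r"
      using that by (auto simp: r_def R2_def)
    have "(U x)\<^sup>2 \<le> (C1 * exp (- (1 / 2) * r))\<^sup>2"
      using C1[of x] pos[of x] by (intro power_mono) (auto simp: r_def)
    also have "\<dots> = C1\<^sup>2 / exp r"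
      by (simp add: power_mult_distrib power2_eq_square exp_minus field_simps flip: exp_add)
    also have "\<dots> \<le> C1\<^sup>2 / (r\<^sup>2 / 4)"
      using exp_ge_square_div_4[of r] r by (intro divide_left_mono) auto
    also have "\<dots> \<le> r / r\<^sup>2"
      using r by (simp add: divide_right_mono)
    also have "\<dots> = 1 / r"
      by (simp add: power2_eq_square)
    finally have "(U x)\<^sup>2 \<le> 1 / r" .
    moreover have "1 / r \<le> (real DIM('a) - 1) / r" "1 / r < 1"
      using dim r by (auto intro: divide_right_mono)
    ultimately show ?thesis
      by (simp add: r_def)
  qed
  have "\<exists>C. \<forall>x. U x \<le> C * exp (- 1 * norm x)"
    by (rule comparison[of 1 R2, OF _ _ outside_one]) (auto simp: R2_def)
  then show ?thesis
    by simp
qed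

section \<open>Rotations in the first coordinate plane\<close>

lemma ix1_neq_ix2:
  assumes "CARD('n::{finite,wellorder}) \<ge> 2"
  shows "(ix1::'n) \<noteq> ix2"
proof -
  have "\<exists>j::'n. j \<noteq> ix1"
  proof (rule ccontr)
    assume "\<not> (\<exists>j::'n. j \<noteq> ix1)"
    then have "(UNIV::'n set) \<subseteq> {ix1}"
      by auto
    with assms show False
      using card_mono[of "{ix1}" "UNIV::'n set"] by simp
  qed
  then have "(LEAST i::'n. i \<noteq> ix1) \<noteq> ix1"
    by (rule LeastI_ex)
  then show ?thesis
    by (simp add: ix2_def)
qed

lemma norm_vec_sq_split_ix12:
  fixes v :: "real^'n::{finite,wellorder}"
  assumes "(ix1::'n) \<noteq> ix2"
  shows "(norm v)\<^sup>2 = (v$ix1)\<^sup>2 + (v$ix2)\<^sup>2 + (\<Sum>j\<in>- {ix1, ix2}. (v$j)\<^sup>2)"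
proof -
  have "(norm v)\<^sup>2 = (\<Sum>j\<in>UNIV. (v$j)\<^sup>2)"
    by (simp add: norm_vec_def L2_set_def sum_nonneg)
  also have "\<dots> = (\<Sum>j\<in>{ix1, ix2}. (v$j)\<^sup>2) + (\<Sum>j\<in>- {ix1, ix2}. (v$j)\<^sup>2)"
    using sum.subset_diff[of "{ix1, ix2}" UNIV] by (simp add: Compl_eq_Diff_UNIV add.commute)
  finally show ?thesis
    using assms by simp
qed

lemma Rot_diff: "Rot \<theta> (x - y) = Rot \<theta> x - Rot \<theta> y"
  by (simp add: Rot_def vec_eq_iff algebra_simps)

lemma Rot_scaleR: "Rot \<theta> (c *\<^sub>R x) = c *\<^sub>R Rot \<theta> x"
  by (simp add: Rot_def vec_eq_iff algebra_simps)

lemma Rot_Rot_uminus: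
  fixes x :: "real^'n::{finite,wellorder}"
  assumes "(ix1::'n) \<noteq> ix2"
  shows "Rot \<theta> (Rot (- \<theta>) x) = x"
proof -
  have rotation_identities:
    "(X * c + Y * - s) * c + (- X * - s + Y * c) * s = X * (c\<^sup>2 + s\<^sup>2)"
    "- (X * c + Y * - s) * s + (- X * - s + Y * c) * c = Y * (c\<^sup>2 + s\<^sup>2)" for X Y c s :: real
    by (simp_all add: power2_eq_square algebra_simps)
  have "((ix2::'n) = ix1) = False"
    using assms by auto
  then have "Rot \<theta> (Rot (- \<theta>) x) $ j = x $ j" for j
    unfolding Rot_def
    by (simp only: vec_lambda_beta if_True if_False simp_thms cos_minus sin_minus
        rotation_identities sin_cos_squared_add mult_1_right) (simp add: Rot_def)
  then show ?thesis
    by (simp add: vec_eq_iff)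
qed

lemma norm_Rot:
  fixes x :: "real^'n::{finite,wellorder}"
  assumes "(ix1::'n) \<noteq> ix2"
  shows "norm (Rot \<theta> x) = norm x"
proof -
  have "(X * c + Y * s)\<^sup>2 + (Y * c - X * s)\<^sup>2 = (X\<^sup>2 + Y\<^sup>2) * (c\<^sup>2 + s\<^sup>2)" for X Y c s :: real
    by (simp add: power2_eq_square algebra_simps)
  with assms have "(Rot \<theta> x $ ix1)\<^sup>2 + (Rot \<theta> x $ ix2)\<^sup>2 = (x$ix1)\<^sup>2 + (x$ix2)\<^sup>2"
    by (simp add: Rot_def)
  moreover have "(\<Sum>j\<in>- {ix1, ix2}. (Rot \<theta> x $ j)\<^sup>2) = (\<Sum>j\<in>- {ix1, ix2}. (x $ j)\<^sup>2)"
    by (intro sum.cong) (auto simp: Rot_def)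
  ultimately have "(norm (Rot \<theta> x))\<^sup>2 = (norm x)\<^sup>2"
    unfolding norm_vec_sq_split_ix12[OF assms] by simp
  then show ?thesis
    by (rule power2_eq_imp_eq) simp_all
qed

lemma norm_ThetaHat_diff_xi:
  fixes x :: "real^'n::{finite,wellorder}"
  assumes "(ix1::'n) \<noteq> ix2"
  shows "norm (ThetaHat d k i x - \<rho> *\<^sub>R xi k h) = norm (x - \<rho> *\<^sub>R eta d k i h)"
proof -
  define \<theta> where "\<theta> = 2 * pi * (real i - 1) / (real d * real k)"
  have "ThetaHat d k i x - \<rho> *\<^sub>R xi k h = Rot \<theta> (x - \<rho> *\<^sub>R eta d k i h)"
    by (simp add: ThetaHat_def eta_def Rot_diff Rot_scaleR Rot_Rot_uminus[OF assms] \<theta>_def)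
  then show ?thesis
    by (simp add: norm_Rot[OF assms])
qed

definition circle_vec :: "real \<Rightarrow> real^'n::{finite,wellorder}" where
  "circle_vec a = (\<chi> j. if j = ix1 then cos a else if j = ix2 then sin a else 0)"

lemma xi_eq_circle_vec: "xi k l = circle_vec (2 * pi * (real l - 1) / real k)"
  by (simp add: xi_def circle_vec_def)

lemma eta_eq_circle_vec:
  assumes "(ix1::'n) \<noteq> ix2"
  shows "(eta d k i l :: real^'n::{finite,wellorder}) =
    circle_vec (2 * pi * (real l - 1) / real k + 2 * pi * (real i - 1) / (real d * real k))"
  using assms
  by (simp add: vec_eq_iff eta_def Rot_def circle_vec_def xi_def cos_add sin_add algebra_simps)

lemma norm_circle_vec_diff:
  assumes "(ix1::'n) \<noteq> ix2"
  shows "norm (circle_vec a - circle_vec b :: real^'n::{finite,wellorder}) = 2 * \<bar>sin ((a - b) / 2)\<bar>"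
proof -
  have "(norm (circle_vec a - circle_vec b :: real^'n::{finite,wellorder}))\<^sup>2 = (cos a - cos b)\<^sup>2 + (sin a - sin b)\<^sup>2"
    using assms unfolding norm_vec_sq_split_ix12[OF assms] by (simp add: circle_vec_def)
  also have "\<dots> = 2 - 2 * cos (a - b)"
    by (simp add: cos_diff power2_eq_square algebra_simps)
  also have "\<dots> = (2 * \<bar>sin ((a - b) / 2)\<bar>)\<^sup>2"
    using cos_double_sin[of "(a - b) / 2"]
    by (simp only: mult_2 field_sum_of_halves) (simp add: power_mult_distrib)
  finally show ?thesis
    by (rule power2_eq_imp_eq) simp_all
qed

lemma norm_xi_diff_eta:
  assumes "(ix1::'n) \<noteq> ix2" "0 \<le> \<rho>" "d > 0" "k > 0"
  shows "norm (\<rho> *\<^sub>R xi k h - \<rho> *\<^sub>R eta d k i h' :: real^'n::{finite,wellorder}) =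
    \<rho> * (2 * \<bar>sin (pi * (real_of_int (int h' - int h) + (real i - 1) / real d) / real k)\<bar>)"
proof -
  define a b where "a = 2 * pi * (real h - 1) / real k"
    and "b = 2 * pi * (real h' - 1) / real k + 2 * pi * (real i - 1) / (real d * real k)"
  have "(a - b) / 2 = - (pi * (real_of_int (int h' - int h) + (real i - 1) / real d) / real k)"
    using assms(3,4) by (simp add: a_def b_def field_simps)
  then show ?thesis
    using assms
    by (simp add: xi_eq_circle_vec eta_eq_circle_vec norm_circle_vec_diff a_def b_def
        flip: scaleR_diff_right)
qed

section \<open>Exponential sums over a regular polygon\<close>

lemma sin_ge_cubic:
  fixes x :: real
  assumes "0 \<le> x"
  shows "x - x ^ 3 / 6 \<le> sin x"
proof -
  have "\<bar>sin x - (\<Sum>m<3. sin_coeff m * x ^ m)\<bar> \<le> inverse (fact 3) * \<bar>x\<bar> ^ 3"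
    by (rule Maclaurin_sin_bound)
  moreover have "(\<Sum>m<3. sin_coeff m * x ^ m) = x"
    by (simp add: sin_coeff_def numeral_3_eq_3)
  moreover have "inverse (fact 3) * \<bar>x\<bar> ^ 3 = x ^ 3 / 6"
    using assms by (simp add: fact_numeral)
  ultimately have "\<bar>sin x - x\<bar> \<le> x ^ 3 / 6"
    by simp
  then show ?thesis
    by (smt (verit))
qed

lemma sin_ge_half:
  fixes x :: real
  assumes "0 \<le> x" "x \<le> pi / 2"
  shows "x / 2 \<le> sin x"
proof -
  have "x \<le> 8 / 5"
    using assms pi_approx(2) by simp
  then have "x * x \<le> 3"
    using assms mult_mono[of x "8 / 5" x "8 / 5"] by simp
  then have "x ^ 3 \<le> 3 * x"
    using mult_left_mono[of "x * x" 3 x] assms by (simp add: power3_eq_cube mult.commute)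
  with sin_ge_cubic[OF assms(1)] show ?thesis
    by simp
qed

lemma sum_power_from_1_le:
  fixes q :: real
  assumes "0 \<le> q" "q \<le> 1 / 2"
  shows "(\<Sum>m\<in>{1..<N}. q ^ m) \<le> 2 * q"
proof -
  have "(\<Sum>m\<in>{1..<Suc n}. q ^ m) + 2 * q ^ Suc n \<le> 2 * q" for n
  proof (induction n)
    case (Suc n)
    have "2 * q ^ Suc (Suc n) \<le> q ^ Suc n"
      using assms mult_right_mono[of "2 * q" 1 "q ^ Suc n"] by (simp add: mult.assoc)
    with Suc show ?case
      by simp
  qed simp
  moreover have "0 \<le> 2 * q ^ Suc n" for n
    using assms by simp
  ultimately show ?thesis
    using assms by (cases N) (simp, smt (verit))
qed

lemma exp_neg_sin_le_powers:
  fixes k m :: nat and t c \<rho> :: real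
  assumes "m < k" "0 \<le> t" "t \<le> 1" "0 \<le> c" "0 \<le> \<rho>"
  shows "exp (- 2 * c * \<rho> * sin (pi * (real m + t) / k))
    \<le> exp (- c * pi * \<rho> / k) ^ m + exp (- c * pi * \<rho> / k) ^ (k - 1 - m)"
proof -
  define x where "x = pi * (real m + t) / k"
  have "real m + 1 \<le> real k"
    using assms(1) by linarith
  then have "pi * (real m + t) \<le> pi * real k" "pi * real (k - 1 - m) \<le> pi * (real k - real m - t)"
    using assms(1,3) by (auto simp: of_nat_diff)
  moreover have "pi - x = pi * (real k - real m - t) / k"
    using assms(1) by (simp add: x_def field_simps)
  ultimately have x: "0 \<le> x" "x \<le> pi" "pi * real m / k \<le> x" "pi * real (k - 1 - m) / k \<le> pi - x"
    using assms(2) by (auto simp: x_def divide_le_eq intro!: divide_right_mono)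
  have c\<rho>: "0 \<le> c * \<rho>"
    using assms(4,5) by simp
  have "exp (- 2 * c * \<rho> * sin x) \<le> exp (- c * pi * \<rho> / k) ^ m
      \<or> exp (- 2 * c * \<rho> * sin x) \<le> exp (- c * pi * \<rho> / k) ^ (k - 1 - m)"
  proof (cases "x \<le> pi / 2")
    case True
    with sin_ge_half[OF x(1)] x(3) have "pi * real m / k \<le> 2 * sin x"
      by linarith
    from mult_left_mono[OF this c\<rho>] show ?thesis
      by (simp flip: exp_of_nat_mult add: mult_ac)
  next
    case False
    with sin_ge_half[of "pi - x"] x(2,4) have "pi * real (k - 1 - m) / k \<le> 2 * sin x"
      by simp
    from mult_left_mono[OF this c\<rho>] show ?thesis
      by (simp flip: exp_of_nat_mult add: mult_ac)
  qed
  then show ?thesis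
    unfolding x_def by (smt (verit) zero_le_power exp_ge_zero)
qed

lemma sum_exp_neg_sin_le:
  fixes k :: nat and t c \<rho> :: real
  assumes "k \<ge> 2" "0 \<le> t" "t \<le> 1" "0 \<le> c" "0 \<le> \<rho>"
    and small: "exp (- c * pi * \<rho> / k) \<le> 1 / 2"
  shows "(\<Sum>m<k. exp (- 2 * c * \<rho> * sin (pi * (real m + t) / k)))
    \<le> exp (- 2 * c * \<rho> * sin (pi * t / k)) + exp (- 2 * c * \<rho> * sin (pi * (1 - t) / k))
      + 4 * exp (- c * pi * \<rho> / k)"
proof -
  define f where "f m = exp (- 2 * c * \<rho> * sin (pi * (real m + t) / k))" for m :: nat
  define Q where "Q = exp (- c * pi * \<rho> / k)"
  have "(\<Sum>m<k. f m) = f 0 + (\<Sum>m\<in>{1..<k - 1}. f m) + f (k - 1)"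
  proof -
    have "{..<k} = insert 0 (insert (k - 1) {1..<k - 1})"
      using assms(1) by auto
    then show ?thesis
      using assms(1) by simp
  qed
  also have "(\<Sum>m\<in>{1..<k - 1}. f m) \<le> (\<Sum>m\<in>{1..<k - 1}. Q ^ m + Q ^ (k - 1 - m))"
    unfolding f_def Q_def using assms(2-5) by (intro sum_mono exp_neg_sin_le_powers) auto
  also have "\<dots> = 2 * (\<Sum>m\<in>{1..<k - 1}. Q ^ m)"
  proof -
    have "(\<Sum>m\<in>{1..<k - 1}. Q ^ (k - 1 - m)) = (\<Sum>m\<in>{1..<k - 1}. Q ^ m)"
      by (rule sum.reindex_bij_witness[of _ "\<lambda>m. k - 1 - m" "\<lambda>m. k - 1 - m"]) auto
    then show ?thesis
      by (simp add: sum.distrib)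
  qed
  also have "\<dots> \<le> 4 * Q"
    using sum_power_from_1_le[of Q "k - 1"] small by (simp add: Q_def)
  also have "f (k - 1) = exp (- 2 * c * \<rho> * sin (pi * (1 - t) / k))"
  proof -
    have "pi * (real (k - 1) + t) / k = pi - pi * (1 - t) / k"
      using assms(1) by (simp add: of_nat_diff field_simps)
    then show ?thesis
      by (simp add: f_def)
  qed
  finally show ?thesis
    by (simp add: f_def Q_def)
qed

lemma abs_sin_add_of_int_mult_pi: "\<bar>sin (x + of_int q * pi)\<bar> = \<bar>sin x\<bar>"
proof -
  have "sin (of_int q * pi) = 0"
    using sin_zero_iff_int2 by blast
  moreover from this have "\<bar>cos (of_int q * pi)\<bar> = 1"
    using sin_cos_squared_add[of "of_int q * pi"] by (simp add: power2_eq_1_iff abs_if) auto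
  ultimately show ?thesis
    by (simp add: sin_add abs_mult)
qed

lemma abs_sin_pi_div_eq_mod:
  fixes k :: nat and z :: int and t :: real
  assumes "k \<ge> 1" "0 \<le> t" "t \<le> 1"
  shows "\<bar>sin (pi * (of_int z + t) / k)\<bar> = sin (pi * (real (nat (z mod int k)) + t) / k)"
proof -
  define m where "m = z mod int k"
  have "0 < int k"
    using assms(1) by simp
  then have m: "0 \<le> m" "m + 1 \<le> int k"
    by (simp_all add: m_def pos_mod_bound[THEN zless_imp_add1_zle])
  have "real_of_int z = of_int m + of_int (z div int k) * real k"
    unfolding m_def by (metis div_mult_mod_eq add.commute of_int_add of_int_mult of_int_of_nat_eq)
  then have "pi * (of_int z + t) / k = pi * (of_int m + t) / k + of_int (z div int k) * pi"
    using assms(1) by (simp add: field_simps)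
  then have "\<bar>sin (pi * (of_int z + t) / k)\<bar> = \<bar>sin (pi * (of_int m + t) / k)\<bar>"
    by (simp add: abs_sin_add_of_int_mult_pi)
  also have "\<dots> = sin (pi * (of_int m + t) / k)"
  proof -
    have "of_int m + t \<le> real k"
      using m assms(3) by linarith
    then have "pi * (of_int m + t) / k \<le> pi"
      using assms(1) by (simp add: divide_le_eq mult_left_mono)
    with m assms(2) show ?thesis
      by (simp add: sin_ge_zero)
  qed
  finally show ?thesis
    using m by (simp add: m_def)
qed

lemma sum_atLeastAtMost_mod_reindex:
  fixes F :: "nat \<Rightarrow> 'a::comm_monoid_add" and k :: nat and j :: int
  assumes "k \<ge> 1"
  shows "(\<Sum>h\<in>{1..k}. F (nat ((j - int h) mod int k))) = (\<Sum>m<k. F m)"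
proof (rule sum.reindex_bij_witness[of _ "\<lambda>m. nat ((j - int m - 1) mod int k) + 1"
      "\<lambda>h. nat ((j - int h) mod int k)"])
  have k: "int k > 0"
    using assms by simp
  fix h
  assume h: "h \<in> {1..k}"
  have "(j - (j - int h) mod int k - 1) mod int k = (j - 1 - (j - int h) mod int k) mod int k"
    by (simp add: algebra_simps)
  also have "\<dots> = (j - 1 - (j - int h)) mod int k"
    by (simp add: mod_diff_right_eq)
  also have "\<dots> = int (h - 1)"
    using h by (simp add: algebra_simps)
  finally have "(j - (j - int h) mod int k - 1) mod int k = int (h - 1)" .
  moreover have "int (nat ((j - int h) mod int k)) = (j - int h) mod int k"
    using k by simp
  ultimately show "nat ((j - int (nat ((j - int h) mod int k)) - 1) mod int k) + 1 = h"
    using h by (cases h) auto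
  show "nat ((j - int h) mod int k) \<in> {..<k}"
    using k by (simp add: nat_less_iff)
next
  have k: "int k > 0"
    using assms by simp
  fix m
  assume m: "m \<in> {..<k}"
  have "0 \<le> (j - int m - 1) mod int k"
    using k by simp
  then have "(j - int (nat ((j - int m - 1) mod int k) + 1)) mod int k
      = (j - 1 - (j - int m - 1) mod int k) mod int k"
    by (simp add: algebra_simps)
  also have "\<dots> = (j - 1 - (j - int m - 1)) mod int k"
    by (simp add: mod_diff_right_eq)
  also have "\<dots> = int m"
    using m by simp
  finally show "nat ((j - int (nat ((j - int m - 1) mod int k) + 1)) mod int k) = m"
    by simp
  have "nat ((j - int m - 1) mod int k) < k"
    using k by (simp add: nat_less_iff)
  then show "nat ((j - int m - 1) mod int k) + 1 \<in> {1..k}"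
    by simp
qed simp

lemma sum_exp_abs_sin_shift:
  fixes k :: nat and j :: int and t c \<rho> :: real
  assumes "k \<ge> 1" "0 \<le> t" "t \<le> 1"
  shows "(\<Sum>h\<in>{1..k}. exp (- c * (\<rho> * (2 * \<bar>sin (pi * (of_int (j - int h) + t) / k)\<bar>))))
    = (\<Sum>m<k. exp (- 2 * c * \<rho> * sin (pi * (real m + t) / k)))"
proof -
  define F where "F m = exp (- 2 * c * \<rho> * sin (pi * (real m + t) / k))" for m
  have "exp (- c * (\<rho> * (2 * \<bar>sin (pi * (of_int (j - int h) + t) / k)\<bar>)))
      = F (nat ((j - int h) mod int k))" for h
    unfolding abs_sin_pi_div_eq_mod[OF assms] F_def by (simp add: mult_ac)
  then have "(\<Sum>h\<in>{1..k}. exp (- c * (\<rho> * (2 * \<bar>sin (pi * (of_int (j - int h) + t) / k)\<bar>))))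
      = (\<Sum>h\<in>{1..k}. F (nat ((j - int h) mod int k)))"
    by (rule sum.cong[OF refl])
  also have "\<dots> = (\<Sum>m<k. F m)"
    by (rule sum_atLeastAtMost_mod_reindex[OF assms(1)])
  finally show ?thesis
    unfolding F_def .
qed

lemma exp_neg_sin_le_near_end:
  fixes c \<rho> w D K r :: real
  assumes "0 \<le> c" "0 \<le> \<rho>" "1 \<le> K" "0 < D" "1 / D \<le> w" "w \<le> 1" "\<rho> \<le> r * K ^ 3"
  shows "exp (- 2 * c * \<rho> * sin (pi * w / K)) \<le> exp (c * pi ^ 3 * r / 3) * exp (- c * (2 * pi * \<rho> / (D * K)))"
proof -
  define x A where "x = pi * w / K" and "A = 2 * pi * \<rho> / (D * K)"
  have "0 \<le> w"
    using assms(4,5) order_trans[of 0 "1 / D" w] by simp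
  then have "0 \<le> x" "x \<le> pi / K"
    using assms(3,6) by (auto simp: x_def divide_right_mono)
  then have "\<rho> * x ^ 3 \<le> r * K ^ 3 * (pi / K) ^ 3"
    using assms(2,3,7) by (intro mult_mono power_mono) auto
  also have "\<dots> = r * pi ^ 3"
    using assms(3) by (simp add: power_divide)
  finally have cubic: "\<rho> * x ^ 3 \<le> r * pi ^ 3" .
  have "A \<le> 2 * \<rho> * x"
    using mult_left_mono[OF mult_right_mono[OF assms(5), of "pi / K"], of "2 * \<rho>"] assms(2,3)
    by (simp add: x_def A_def field_simps)
  moreover have "2 * \<rho> * (x - x ^ 3 / 6) \<le> 2 * \<rho> * sin x"
    using sin_ge_cubic[OF \<open>0 \<le> x\<close>] assms(2) by (intro mult_left_mono) auto
  ultimately have "A - r * pi ^ 3 / 3 \<le> 2 * \<rho> * sin x"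
    using cubic by (simp add: algebra_simps)
  from mult_left_mono[OF this assms(1)]
  have "- 2 * c * \<rho> * sin x \<le> c * pi ^ 3 * r / 3 + - c * A"
    by (simp add: algebra_simps)
  then show ?thesis
    by (simp add: x_def flip: A_def exp_add)
qed

section \<open>Interaction estimates\<close>

lemma sum_exp_dist_xi_le_4:
  fixes y :: "real^'n::{finite,wellorder}"
  assumes ne: "(ix1::'n) \<noteq> ix2" and "k \<ge> 2" "0 \<le> \<rho>"
    and small: "exp (- (1 / 2) * pi * \<rho> / k) \<le> 1 / 2"
  shows "(\<Sum>h = 1..k. exp (- norm (y - \<rho> *\<^sub>R xi k h))) \<le> 4"
proof -
  define g where "g h = norm (y - \<rho> *\<^sub>R (xi k h :: real^'n::{finite,wellorder}))" for h
  define h0 where "h0 = arg_min_on g {1..k}"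
  have h0: "h0 \<in> {1..k}" "\<And>h. h \<in> {1..k} \<Longrightarrow> g h0 \<le> g h"
    using assms(2) arg_min_if_finite(1)[of "{1..k}" g] arg_min_least[of "{1..k}" _ g]
    by (auto simp: h0_def)
  \<comment> \<open>The vertex \<open>\<rho> * xi k h0\<close> nearest to \<open>y\<close> lies within \<open>2 * g h\<close> of every other vertex.\<close>
  have "exp (- g h) \<le> exp (- (1 / 2) * (\<rho> * (2 * \<bar>sin (pi * (of_int (int h0 - int h) + 0) / k)\<bar>)))"
    if "h \<in> {1..k}" for h
  proof -
    have "eta 1 k 1 h0 = (xi k h0 :: real^'n::{finite,wellorder})"
      by (simp add: eta_eq_circle_vec[OF ne] xi_eq_circle_vec)
    then have "\<rho> * (2 * \<bar>sin (pi * (of_int (int h0 - int h) + 0) / k)\<bar>)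
        = norm (\<rho> *\<^sub>R xi k h - \<rho> *\<^sub>R (xi k h0 :: real^'n::{finite,wellorder}))"
      using norm_xi_diff_eta[OF ne \<open>0 \<le> \<rho>\<close>, of 1 k h 1 h0] assms(2) by simp
    also have "\<dots> \<le> g h + g h0"
      unfolding g_def using norm_triangle_ineq4[of "y - \<rho> *\<^sub>R xi k h0" "y - \<rho> *\<^sub>R xi k h"]
      by (simp add: norm_minus_commute)
    also have "\<dots> \<le> 2 * g h"
      using h0(2)[OF that] by simp
    finally show ?thesis
      by simp
  qed
  then have "(\<Sum>h = 1..k. exp (- norm (y - \<rho> *\<^sub>R xi k h)))
      \<le> (\<Sum>h = 1..k. exp (- (1 / 2) * (\<rho> * (2 * \<bar>sin (pi * (of_int (int h0 - int h) + 0) / k)\<bar>))))"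
    unfolding g_def by (rule sum_mono)
  also have "\<dots> = (\<Sum>m<k. exp (- 2 * (1 / 2) * \<rho> * sin (pi * (real m + 0) / k)))"
    by (rule sum_exp_abs_sin_shift) (use assms(2) in auto)
  also have "\<dots> \<le> exp (- 2 * (1 / 2) * \<rho> * sin (pi * 0 / k))
      + exp (- 2 * (1 / 2) * \<rho> * sin (pi * (1 - 0) / k)) + 4 * exp (- (1 / 2) * pi * \<rho> / k)"
    by (rule sum_exp_neg_sin_le) (use assms in auto)
  also have "\<dots> \<le> 1 + 1 + 4 * (1 / 2)"
  proof -
    have "0 \<le> sin (pi / k)"
      using assms(2) by (intro sin_ge_zero) (auto simp: field_simps)
    with \<open>0 \<le> \<rho>\<close> have "exp (- 2 * (1 / 2) * \<rho> * sin (pi * (1 - 0) / k)) \<le> 1"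
      by simp
    moreover have "exp (- 2 * (1 / 2) * \<rho> * sin (pi * 0 / k)) = 1"
      by simp
    ultimately show ?thesis
      using small by linarith
  qed
  finally show ?thesis
    by simp
qed

lemma sum_exp_dist_xi_eta_le:
  assumes ne: "(ix1::'n) \<noteq> ix2" and "k \<ge> 2" "0 \<le> \<rho>" "d \<ge> 2" "i \<in> {2..d}" "0 \<le> c"
    and small: "exp (- c * pi * \<rho> / k) \<le> 1 / 2" and "\<rho> \<le> r * real k ^ 3"
  shows "(\<Sum>h = 1..k. exp (- c * norm (\<rho> *\<^sub>R xi k h - \<rho> *\<^sub>R eta d k i h' :: real^'n::{finite,wellorder})))
    \<le> (2 * exp (c * pi ^ 3 * r / 3) + 4) * exp (- c * (2 * pi * \<rho> / (real d * real k)))"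
proof -
  define t where "t = (real i - 1) / real d"
  define E where "E = exp (- c * (2 * pi * \<rho> / (real d * real k)))"
  have t: "1 / real d \<le> t" "t \<le> 1 - 1 / real d"
    using assms(4,5) by (auto simp: t_def field_simps)
  moreover have "0 \<le> 1 / real d"
    by simp
  ultimately have "0 \<le> t" "t \<le> 1" "1 / real d \<le> 1 - t"
    by linarith+
  have "(\<Sum>h = 1..k. exp (- c * norm (\<rho> *\<^sub>R xi k h - \<rho> *\<^sub>R eta d k i h' :: real^'n::{finite,wellorder})))
      = (\<Sum>h = 1..k. exp (- c * (\<rho> * (2 * \<bar>sin (pi * (of_int (int h' - int h) + t) / k)\<bar>))))"
    using assms(2,4) by (simp add: norm_xi_diff_eta[OF ne \<open>0 \<le> \<rho>\<close>] t_def)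
  also have "\<dots> = (\<Sum>m<k. exp (- 2 * c * \<rho> * sin (pi * (real m + t) / k)))"
    by (rule sum_exp_abs_sin_shift) (use assms(2) \<open>0 \<le> t\<close> \<open>t \<le> 1\<close> in auto)
  also have "\<dots> \<le> exp (- 2 * c * \<rho> * sin (pi * t / k)) + exp (- 2 * c * \<rho> * sin (pi * (1 - t) / k))
      + 4 * exp (- c * pi * \<rho> / k)"
    by (rule sum_exp_neg_sin_le) (use assms \<open>0 \<le> t\<close> \<open>t \<le> 1\<close> in auto)
  also have "\<dots> \<le> exp (c * pi ^ 3 * r / 3) * E + exp (c * pi ^ 3 * r / 3) * E + 4 * E"
  proof -
    have "c * (2 * pi * \<rho> / (real d * real k)) \<le> c * (pi * \<rho> / k)"
      using assms(2-4,6) mult_left_mono[of 2 "real d" \<rho>] by (intro mult_left_mono) (auto simp: field_simps)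
    then have exp_le: "exp (- c * pi * \<rho> / k) \<le> E"
      by (simp add: E_def)
    have near_end: "exp (- 2 * c * \<rho> * sin (pi * w / k)) \<le> exp (c * pi ^ 3 * r / 3) * E"
      if "1 / real d \<le> w" "w \<le> 1" for w
      unfolding E_def using assms that by (intro exp_neg_sin_le_near_end) auto
    have "1 - t \<le> 1"
      using \<open>0 \<le> t\<close> by simp
    then show ?thesis
      using exp_le near_end[OF t(1) \<open>t \<le> 1\<close>] near_end[OF \<open>1 / real d \<le> 1 - t\<close>] by linarith
  qed
  finally show ?thesis
    by (simp add: E_def algebra_simps)
qed

lemma Wrho_nonneg:
  assumes "\<And>y. 0 < U y"
  shows "0 \<le> Wrho U k \<rho> x"
  unfolding Wrho_def using assms by (intro sum_nonneg) (simp add: less_imp_le)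

lemma Wrho_le_sum_exp:
  assumes "\<And>y. U y \<le> C0 * exp (- norm y)"
  shows "Wrho U k \<rho> x \<le> C0 * (\<Sum>h = 1..k. exp (- norm (x - \<rho> *\<^sub>R xi k h)))"
  unfolding Wrho_def sum_distrib_left using assms by (intro sum_mono)

lemma Wrho_ThetaHat_le_sum_exp:
  fixes x :: "real^'n::{finite,wellorder}"
  assumes "(ix1::'n) \<noteq> ix2" "\<And>y. U y \<le> C0 * exp (- norm y)"
  shows "Wrho U k \<rho> (ThetaHat d k i x) \<le> C0 * (\<Sum>h = 1..k. exp (- norm (x - \<rho> *\<^sub>R eta d k i h)))"
  unfolding Wrho_def sum_distrib_left
  by (intro sum_mono) (metis assms(2) norm_ThetaHat_diff_xi[OF assms(1)])

lemma exp_neg_norm_mult_exp_neg_norm_le: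
  fixes x a b :: "'a::real_normed_vector"
  assumes "0 \<le> \<alpha>" "\<alpha> \<le> 1"
  shows "exp (- norm (x - a)) * exp (- norm (x - b))
    \<le> exp (- \<alpha> * norm (x - b)) * exp (- (1 - \<alpha>) * norm (a - b))"
proof -
  have "norm (a - b) \<le> norm (x - a) + norm (x - b)"
    using norm_triangle_ineq4[of "x - b" "x - a"] by (simp add: norm_minus_commute)
  then have "(1 - \<alpha>) * norm (a - b) \<le> (1 - \<alpha>) * (norm (x - a) + norm (x - b))"
    using assms by (intro mult_left_mono) auto
  moreover have "0 \<le> \<alpha> * norm (x - a)"
    using assms by simp
  ultimately show ?thesis
    by (simp add: algebra_simps flip: exp_add)
qed

lemma Wrho_mult_Wrho_ThetaHat_le:
  fixes x :: "real^'n::{finite,wellorder}"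
  assumes ne: "(ix1::'n) \<noteq> ix2" and C0: "\<And>y. U y \<le> C0 * exp (- norm y)" and pos: "\<And>y. 0 < U y"
    and "0 < \<alpha>" "\<alpha> < 1" "2 \<le> k" "0 \<le> \<rho>" "2 \<le> d" "i \<in> {2..d}"
    and "exp (- (1 - \<alpha>) * pi * \<rho> / k) \<le> 1 / 2" "\<rho> \<le> r * real k ^ 3"
  shows "Wrho U k \<rho> x * Wrho U k \<rho> (ThetaHat d k i x) \<le>
    C0\<^sup>2 * (2 * exp ((1 - \<alpha>) * pi ^ 3 * r / 3) + 4) * exp (- (1 - \<alpha>) * (2 * pi * \<rho> / (real d * real k)))
      * (\<Sum>j = 1..k. exp (- \<alpha> * norm (x - \<rho> *\<^sub>R eta d k i j)))"
proof -
  define B where "B = (2 * exp ((1 - \<alpha>) * pi ^ 3 * r / 3) + 4)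
    * exp (- (1 - \<alpha>) * (2 * pi * \<rho> / (real d * real k)))"
  define a b where "a h = exp (- norm (x - \<rho> *\<^sub>R xi k h))"
    and "b j = exp (- norm (x - \<rho> *\<^sub>R eta d k i j))" for h j
  have "Wrho U k \<rho> x \<le> C0 * sum a {1..k}" "Wrho U k \<rho> (ThetaHat d k i x) \<le> C0 * sum b {1..k}"
    unfolding a_def b_def by (rule Wrho_le_sum_exp[OF C0] Wrho_ThetaHat_le_sum_exp[OF ne C0])+
  then have "Wrho U k \<rho> x * Wrho U k \<rho> (ThetaHat d k i x) \<le> (C0 * sum a {1..k}) * (C0 * sum b {1..k})"
    using Wrho_nonneg[of U, OF pos, of k \<rho>] by (intro mult_mono) (blast intro: order_trans)+
  also have "\<dots> = C0\<^sup>2 * (\<Sum>j = 1..k. \<Sum>h = 1..k. a h * b j)"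
    by (subst sum.swap) (simp add: power2_eq_square sum_product mult_ac)
  also have "\<dots> \<le> C0\<^sup>2 * (\<Sum>j = 1..k. exp (- \<alpha> * norm (x - \<rho> *\<^sub>R eta d k i j)) * B)"
  proof (intro mult_left_mono sum_mono)
    fix j
    have "(\<Sum>h = 1..k. a h * b j) \<le> (\<Sum>h = 1..k. exp (- \<alpha> * norm (x - \<rho> *\<^sub>R eta d k i j))
        * exp (- (1 - \<alpha>) * norm (\<rho> *\<^sub>R xi k h - \<rho> *\<^sub>R eta d k i j :: real^'n::{finite,wellorder})))"
      unfolding a_def b_def using assms(4,5)
      by (intro sum_mono exp_neg_norm_mult_exp_neg_norm_le) auto
    also have "\<dots> \<le> exp (- \<alpha> * norm (x - \<rho> *\<^sub>R eta d k i j)) * B"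
      unfolding B_def sum_distrib_left[symmetric] using assms
      by (intro mult_left_mono sum_exp_dist_xi_eta_le) auto
    finally show "(\<Sum>h = 1..k. a h * b j) \<le> exp (- \<alpha> * norm (x - \<rho> *\<^sub>R eta d k i j)) * B" .
  qed simp
  finally show ?thesis
    by (simp add: B_def sum_distrib_left sum_distrib_right mult_ac)
qed

lemma Wrho_le_4:
  fixes y :: "real^'n::{finite,wellorder}"
  assumes ne: "(ix1::'n) \<noteq> ix2" and C0: "\<And>y. U y \<le> C0 * exp (- norm y)" "0 \<le> C0"
    and "2 \<le> k" "0 \<le> \<rho>" "exp (- (1 / 2) * pi * \<rho> / k) \<le> 1 / 2"
  shows "Wrho U k \<rho> y \<le> 4 * C0"
proof -
  have "(\<Sum>h = 1..k. exp (- norm (y - \<rho> *\<^sub>R xi k h))) \<le> 4"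
    by (rule sum_exp_dist_xi_le_4[OF ne assms(4-6)])
  then have "C0 * (\<Sum>h = 1..k. exp (- norm (y - \<rho> *\<^sub>R xi k h))) \<le> C0 * 4"
    using C0(2) by (intro mult_left_mono)
  with Wrho_le_sum_exp[OF C0(1), of k \<rho> y] show ?thesis
    by linarith
qed

lemma sum_Wrho_mult_Wrho_ThetaHat_le:
  fixes x :: "real^'n::{finite,wellorder}"
  assumes ne: "(ix1::'n) \<noteq> ix2" and C0: "\<And>y. U y \<le> C0 * exp (- norm y)" and pos: "\<And>y. 0 < U y"
    and "0 < \<alpha>" "\<alpha> < 1" "2 \<le> d" "2 \<le> k" "0 \<le> \<rho>" "\<rho> \<le> r * real k ^ 3"
    and "exp (- (1 - \<alpha>) * pi * \<rho> / k) \<le> 1 / 2"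
  shows "(\<Sum>i = 2..d. Wrho U k \<rho> x * Wrho U k \<rho> (ThetaHat d k i x)) \<le>
    C0\<^sup>2 * (2 * exp ((1 - \<alpha>) * pi ^ 3 * r / 3) + 4) * exp (- (1 - \<alpha>) * (2 * pi * \<rho> / (real d * real k)))
      * (\<Sum>i = 1..d. \<Sum>j = 1..k. exp (- \<alpha> * norm (x - \<rho> *\<^sub>R eta d k i j)))"
    (is "_ \<le> ?B * _")
proof -
  have "(\<Sum>i = 2..d. Wrho U k \<rho> x * Wrho U k \<rho> (ThetaHat d k i x))
      \<le> (\<Sum>i = 2..d. ?B * (\<Sum>j = 1..k. exp (- \<alpha> * norm (x - \<rho> *\<^sub>R eta d k i j))))"
    by (intro sum_mono Wrho_mult_Wrho_ThetaHat_le[OF ne C0 pos]) (use assms(4-10) in auto)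
  also have "\<dots> \<le> ?B * (\<Sum>i = 1..d. \<Sum>j = 1..k. exp (- \<alpha> * norm (x - \<rho> *\<^sub>R eta d k i j)))"
    unfolding sum_distrib_left[symmetric]
    by (intro mult_left_mono sum_mono2) (auto intro: sum_nonneg)
  finally show ?thesis .
qed

lemma star_norm_le:
  fixes f :: "real^'n::{finite,wellorder} \<Rightarrow> real"
  assumes "1 \<le> d" "1 \<le> k"
    and "\<And>x. \<bar>f x\<bar> \<le> M * (\<Sum>i = 1..d. \<Sum>j = 1..k. exp (- \<alpha> * norm (x - \<rho> *\<^sub>R eta d k i j)))"
  shows "star_norm d k \<alpha> \<rho> f \<le> ereal M"
  unfolding star_norm_def
proof (rule SUP_least)
  fix x :: "real^'n::{finite,wellorder}"
  have "0 < (\<Sum>i = 1..d. \<Sum>j = 1..k. exp (- \<alpha> * norm (x - \<rho> *\<^sub>R eta d k i j)))"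
    using assms(1,2) by (intro sum_pos) auto
  with assms(3)[of x] show "ereal (\<bar>f x\<bar> / (\<Sum>i = 1..d. \<Sum>j = 1..k. exp (- \<alpha> * norm (x - \<rho> *\<^sub>R eta d k i j))))
      \<le> ereal M"
    by (simp add: divide_le_eq)
qed

lemma Dk_bounds:
  assumes "0 < c" "0 < r1" "0 \<le> r2" "nat \<lceil>exp (2 / (c * pi * r1))\<rceil> + 2 \<le> k"
    and "\<rho> \<in> Dk r1 r2 k"
  shows "2 \<le> k" "0 \<le> \<rho>" "\<rho> \<le> r2 * real k ^ 3"
    "\<And>c'. c \<le> c' \<Longrightarrow> exp (- c' * pi * \<rho> / k) \<le> 1 / 2"
proof -
  show "2 \<le> k"
    using assms(4) by simp
  then have k: "1 \<le> real k"
    by simp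
  have "exp (2 / (c * pi * r1)) \<le> real (nat \<lceil>exp (2 / (c * pi * r1))\<rceil>)"
    by (rule real_nat_ceiling_ge)
  also have "\<dots> \<le> real k"
    using assms(4) by simp
  finally have k_large: "exp (2 / (c * pi * r1)) \<le> real k" .
  have \<rho>: "r1 * real k * ln (real k) \<le> \<rho>" "\<rho> \<le> r2 * real k * ln (real k)"
    using assms(5) by (auto simp: Dk_def)
  have "0 \<le> r1 * real k * ln (real k)"
    using assms(2) k by simp
  with \<rho>(1) show "0 \<le> \<rho>"
    by linarith
  have "1 * real k \<le> real k * real k"
    using k by (intro mult_right_mono) auto
  then have "ln (real k) \<le> real k * real k"
    using ln_le_minus_one[of "real k"] k by linarith
  then have "r2 * real k * ln (real k) \<le> r2 * real k * (real k * real k)"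
    using assms(3) k by (intro mult_left_mono) auto
  with \<rho>(2) show "\<rho> \<le> r2 * real k ^ 3"
    by (simp add: power3_eq_cube mult.assoc)
  have "2 / (c * pi * r1) \<le> ln (real k)"
    using k_large by (metis exp_gt_zero ln_exp ln_le_cancel_iff less_le_trans)
  then have "2 \<le> c * pi * (r1 * ln (real k))"
    using assms(1,2) by (simp add: field_simps)
  also have "\<dots> \<le> c * pi * (\<rho> / k)"
    using \<rho>(1) assms(1) k by (intro mult_left_mono) (auto simp: field_simps)
  finally have two_le: "2 \<le> c * (pi * \<rho> / k)"
    by simp
  fix c'
  assume "c \<le> c'"
  then have "c * (pi * \<rho> / k) \<le> c' * (pi * \<rho> / k)"
    using \<open>0 \<le> \<rho>\<close> by (intro mult_right_mono) auto
  with two_le have "exp (- c' * pi * \<rho> / k) \<le> exp (- 2)"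
    by simp
  also have "\<dots> \<le> 1 / 2"
    using exp_ge_add_one_self[of 2] by (simp add: exp_minus field_simps)
  finally show "exp (- c' * pi * \<rho> / k) \<le> 1 / 2" .
qed

lemma star_norm_interactions_le:
  fixes U :: "real^'n::{finite,wellorder} \<Rightarrow> real"
  assumes ne: "(ix1::'n) \<noteq> ix2" and C0: "\<And>y. U y \<le> C0 * exp (- norm y)" and pos: "\<And>y. 0 < U y"
    and "0 < \<alpha>" "\<alpha> < 1" "2 \<le> d" "2 \<le> k" "0 \<le> \<rho>" "\<rho> \<le> r * real k ^ 3"
    and small: "exp (- (1 - \<alpha>) * pi * \<rho> / k) \<le> 1 / 2" "exp (- (1 / 2) * pi * \<rho> / k) \<le> 1 / 2"
  defines "C \<equiv> C0\<^sup>2 * (2 * exp ((1 - \<alpha>) * pi ^ 3 * r / 3) + 4) * (4 * C0 + 1)"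
  shows "star_norm d k \<alpha> \<rho> (\<lambda>x. Wrho U k \<rho> x * (\<Sum>i = 2..d. (Wrho U k \<rho> (ThetaHat d k i x))\<^sup>2))
      \<le> ereal (C * exp (- (1 - \<alpha>) * (2 * pi * \<rho> / (real d * real k))))"
    and "star_norm d k \<alpha> \<rho> (\<lambda>x. Wrho U k \<rho> x * (\<Sum>i = 2..d. Wrho U k \<rho> (ThetaHat d k i x)))
      \<le> ereal (C * exp (- (1 - \<alpha>) * (2 * pi * \<rho> / (real d * real k))))"
proof -
  define B where "B = C0\<^sup>2 * (2 * exp ((1 - \<alpha>) * pi ^ 3 * r / 3) + 4)
    * exp (- (1 - \<alpha>) * (2 * pi * \<rho> / (real d * real k)))"
  define E where "E x = (\<Sum>i = 1..d. \<Sum>j = 1..k. exp (- \<alpha> * norm (x - \<rho> *\<^sub>R eta d k i j)))"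
    for x :: "real^'n::{finite,wellorder}"
  define P where "P x = (\<Sum>i = 2..d. Wrho U k \<rho> x * Wrho U k \<rho> (ThetaHat d k i x))" for x
  have C_eq: "C * exp (- (1 - \<alpha>) * (2 * pi * \<rho> / (real d * real k))) = (4 * C0 + 1) * B"
    by (simp add: C_def B_def mult_ac)
  have "0 < C0"
    using C0[of 0] pos[of 0] by simp
  have W_nonneg: "0 \<le> Wrho U k \<rho> y" for y
    using Wrho_nonneg[of U, OF pos] .
  have W_le: "Wrho U k \<rho> y \<le> 4 * C0" for y
    using \<open>0 < C0\<close> by (intro Wrho_le_4[OF ne C0 _ assms(7,8) small(2)]) simp
  have P_le: "P x \<le> B * E x" for x
    unfolding P_def B_def E_def
    by (rule sum_Wrho_mult_Wrho_ThetaHat_le[OF ne C0 pos assms(4-9) small(1)])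
  have "0 \<le> B * E x" for x
    unfolding B_def E_def by (intro mult_nonneg_nonneg sum_nonneg) auto
  then have BE_le: "B * E x \<le> (4 * C0 + 1) * (B * E x)" "4 * C0 * (B * E x) \<le> (4 * C0 + 1) * (B * E x)"
    for x
    using \<open>0 < C0\<close> by (simp_all add: distrib_right)
  show "star_norm d k \<alpha> \<rho> (\<lambda>x. Wrho U k \<rho> x * (\<Sum>i = 2..d. (Wrho U k \<rho> (ThetaHat d k i x))\<^sup>2))
      \<le> ereal (C * exp (- (1 - \<alpha>) * (2 * pi * \<rho> / (real d * real k))))"
  proof (rule star_norm_le)
    fix x
    have "Wrho U k \<rho> x * (\<Sum>i = 2..d. (Wrho U k \<rho> (ThetaHat d k i x))\<^sup>2)
        = (\<Sum>i = 2..d. Wrho U k \<rho> (ThetaHat d k i x) * (Wrho U k \<rho> x * Wrho U k \<rho> (ThetaHat d k i x)))"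
      by (simp add: sum_distrib_left power2_eq_square mult_ac)
    also have "\<dots> \<le> 4 * C0 * P x"
      unfolding P_def sum_distrib_left
      by (intro sum_mono mult_right_mono W_le mult_nonneg_nonneg W_nonneg)
    also have "\<dots> \<le> 4 * C0 * (B * E x)"
      using P_le[of x] \<open>0 < C0\<close> by (intro mult_left_mono) auto
    also have "\<dots> \<le> (4 * C0 + 1) * (B * E x)"
      by (rule BE_le)
    finally show "\<bar>Wrho U k \<rho> x * (\<Sum>i = 2..d. (Wrho U k \<rho> (ThetaHat d k i x))\<^sup>2)\<bar>
        \<le> C * exp (- (1 - \<alpha>) * (2 * pi * \<rho> / (real d * real k)))
          * (\<Sum>i = 1..d. \<Sum>j = 1..k. exp (- \<alpha> * norm (x - \<rho> *\<^sub>R eta d k i j)))"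
      unfolding C_eq E_def[symmetric] using W_nonneg by (simp add: sum_nonneg mult.assoc)
  qed (use assms in auto)
  show "star_norm d k \<alpha> \<rho> (\<lambda>x. Wrho U k \<rho> x * (\<Sum>i = 2..d. Wrho U k \<rho> (ThetaHat d k i x)))
      \<le> ereal (C * exp (- (1 - \<alpha>) * (2 * pi * \<rho> / (real d * real k))))"
  proof (rule star_norm_le)
    fix x
    have "Wrho U k \<rho> x * (\<Sum>i = 2..d. Wrho U k \<rho> (ThetaHat d k i x)) = P x"
      by (simp add: P_def sum_distrib_left)
    also have "\<dots> \<le> B * E x"
      by (rule P_le)
    also have "\<dots> \<le> (4 * C0 + 1) * (B * E x)"
      by (rule BE_le)
    finally show "\<bar>Wrho U k \<rho> x * (\<Sum>i = 2..d. Wrho U k \<rho> (ThetaHat d k i x))\<bar>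
        \<le> C * exp (- (1 - \<alpha>) * (2 * pi * \<rho> / (real d * real k)))
          * (\<Sum>i = 1..d. \<Sum>j = 1..k. exp (- \<alpha> * norm (x - \<rho> *\<^sub>R eta d k i j)))"
      unfolding C_eq E_def[symmetric] using W_nonneg by (simp add: sum_nonneg mult.assoc)
  qed (use assms in auto)
qed

theorem lemma2p4:
  fixes U :: "real^'n::{finite,wellorder} \<Rightarrow> real"
    and d :: nat and \<alpha> r1 r2 :: real
  assumes "CARD('n) \<in> {2, 3}"
    and "d \<ge> 2"
    and "0 < \<alpha>" "\<alpha> < 1"
    and "0 < r1" "r1 < r2"
    and "ground_state U"
  shows "\<exists>C > 0. \<exists>k0 :: nat. \<forall>k \<ge> k0. \<forall>\<rho> \<in> Dk r1 r2 k.
     star_norm d k \<alpha> \<rho> (\<lambda>x. Wrho U k \<rho> x * (\<Sum>i = 2..d. (Wrho U k \<rho> (ThetaHat d k i x))\<^sup>2))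
       \<le> ereal (C * exp (- (1 - \<alpha>) * (2 * pi * \<rho> / (real d * real k)))) \<and>
     star_norm d k \<alpha> \<rho> (\<lambda>x. Wrho U k \<rho> x * (\<Sum>i = 2..d. Wrho U k \<rho> (ThetaHat d k i x)))
       \<le> ereal (C * exp (- (1 - \<alpha>) * (2 * pi * \<rho> / (real d * real k))))"
proof -
  have "2 \<le> CARD('n)"
    using assms(1) by (cases "CARD('n) = 2") simp_all
  then have ne: "(ix1::'n) \<noteq> ix2"
    by (rule ix1_neq_ix2)
  from \<open>2 \<le> CARD('n)\<close> have "DIM(real^'n::{finite,wellorder}) \<ge> 2"
    by simp
  from ground_state_exp_decay[OF assms(7) this]
  obtain C0 where "\<forall>y. U y \<le> C0 * exp (- norm y)"
    by (rule exE)
  note C0 = this[rule_format]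
  have pos: "\<And>y. 0 < U y"
    using assms(7) unfolding ground_state_def by blast
  have "0 < C0"
    using C0[of 0] pos[of 0] by simp
  define C where "C = C0\<^sup>2 * (2 * exp ((1 - \<alpha>) * pi ^ 3 * r2 / 3) + 4) * (4 * C0 + 1)"
  define c where "c = min (1 - \<alpha>) (1 / 2)"
  have "0 < c" "0 \<le> r2"
    using assms(4-6) by (simp_all add: c_def)
  show ?thesis
  proof (intro exI[of _ C] conjI exI[of _ "nat \<lceil>exp (2 / (c * pi * r1))\<rceil> + 2"] allI impI ballI)
    show "0 < C"
      using \<open>0 < C0\<close> by (simp add: C_def add_pos_pos)
    fix k \<rho>
    assume "nat \<lceil>exp (2 / (c * pi * r1))\<rceil> + 2 \<le> k" "\<rho> \<in> Dk r1 r2 k"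
    note \<rho> = Dk_bounds[OF \<open>0 < c\<close> assms(5) \<open>0 \<le> r2\<close> this]
    have "exp (- (1 - \<alpha>) * pi * \<rho> / k) \<le> 1 / 2" "exp (- (1 / 2) * pi * \<rho> / k) \<le> 1 / 2"
      by (rule \<rho>(4), unfold c_def, rule min.cobounded1 min.cobounded2)+
    from star_norm_interactions_le[OF ne C0 pos assms(3,4,2) \<rho>(1-3) this]
    show "star_norm d k \<alpha> \<rho> (\<lambda>x. Wrho U k \<rho> x * (\<Sum>i = 2..d. (Wrho U k \<rho> (ThetaHat d k i x))\<^sup>2))
       \<le> ereal (C * exp (- (1 - \<alpha>) * (2 * pi * \<rho> / (real d * real k))))"
     and "star_norm d k \<alpha> \<rho> (\<lambda>x. Wrho U k \<rho> x * (\<Sum>i = 2..d. Wrho U k \<rho> (ThetaHat d k i x)))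
       \<le> ereal (C * exp (- (1 - \<alpha>) * (2 * pi * \<rho> / (real d * real k))))"
      unfolding C_def by auto
  qed
qed

end
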